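(* For every integer $n>1$, the aura $\mathbb{R}_+^{[n]}$ is archimedean but does not have tempered growth.
   Context: A halo is a commutative unital semiring with a partial order compatible with $+$ and $\cdot$; an aura is a halo whose semiring is a semifield; positive means $0<1$. For positive auras $R_1,\dots,R_n$, the lexicographic product $[\prod]R_i$ is the set $\{0\}\cup\prod_i R_i^\times$ (where $R_i^\times=R_i\setminus\{0\}$ and $0$ is identified with $(0,\dots,0)$), with componentwise addition and multiplication and the lexicographic order (first coordinate most significant); $\mathbb{R}_+^{[n]}$ denotes the lexicographic product of $n$ copies of $\mathbb{R}_+$ (usual operations and order). A positive halo $A$ is archimedean if $A$ is not reduced to $\{0,1\}$ and for all $x>y>0$ there is $m\in\mathbb{N}$ with $my>x$. A halo $R$ has tempered growth if for every non-zero $P\in\mathbb{N}[X]$ and $x\in R$, ($x^m\le P(m)$ for all $m\in\mathbb{N}$) implies $x\le1$, natural numbers being interpreted as sums of $1$. *)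

theory Defs
  imports Main "HOL-Computational_Algebra.Polynomial"
begin

record 'a halo_struct =
  carrier :: "'a set"
  zero :: 'a
  one :: 'a
  add :: "'a \<Rightarrow> 'a \<Rightarrow> 'a"
  mul :: "'a \<Rightarrow> 'a \<Rightarrow> 'a"
  le :: "'a \<Rightarrow> 'a \<Rightarrow> bool"

definition lt :: "('a, 'b) halo_struct_scheme \<Rightarrow> 'a \<Rightarrow> 'a \<Rightarrow> bool" where
  "lt H x y \<longleftrightarrow> le H x y \<and> x \<noteq> y"

definition nsmul :: "('a, 'b) halo_struct_scheme \<Rightarrow> nat \<Rightarrow> 'a \<Rightarrow> 'a" where
  "nsmul H m y = (add H y ^^ m) (zero H)"

definition natH :: "('a, 'b) halo_struct_scheme \<Rightarrow> nat \<Rightarrow> 'a" where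
  "natH H m = nsmul H m (one H)"

definition powH :: "('a, 'b) halo_struct_scheme \<Rightarrow> 'a \<Rightarrow> nat \<Rightarrow> 'a" where
  "powH H x m = (mul H x ^^ m) (one H)"

definition archimedean :: "('a, 'b) halo_struct_scheme \<Rightarrow> bool" where
  "archimedean A \<longleftrightarrow> lt A (zero A) (one A) \<and>
     carrier A \<noteq> {zero A, one A} \<and>
     (\<forall>x\<in>carrier A. \<forall>y\<in>carrier A. lt A y x \<and> lt A (zero A) y \<longrightarrow>
        (\<exists>m::nat. lt A x (nsmul A m y)))"

definition tempered_growth :: "('a, 'b) halo_struct_scheme \<Rightarrow> bool" where
  "tempered_growth R \<longleftrightarrow>
     (\<forall>P :: nat poly. P \<noteq> 0 \<longrightarrow> (\<forall>x\<in>carrier R.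
        (\<forall>m::nat. le R (powH R x m) (natH R (poly P m))) \<longrightarrow> le R x (one R)))"

text \<open>The lexicographic power \<open>\<real>\<^sub>+^[n]\<close>: elements are lists of length n,
  either the zero list or with all entries strictly positive; componentwise
  operations; lexicographic order with the first coordinate most significant.\<close>
definition Rplus_lex :: "nat \<Rightarrow> real list halo_struct" where
  "Rplus_lex n = \<lparr> carrier = {xs. length xs = n \<and>
                       (xs = replicate n 0 \<or> (\<forall>x\<in>set xs. 0 < x))},
                   zero = replicate n 0,
                   one = replicate n 1,
                   add = map2 (+),
                   mul = map2 (*),
                   le = (\<lambda>xs ys. xs = ys \<or> ord_class.lexordp xs ys) \<rparr>"

end

theory Submission
  imports Defs
begin

text \<open>The first coordinate dominates the lexicographic order, and it behaves like the
  archimedean halo \<open>\<real>\<^sub>+\<close>: multiples of \<open>y\<close> eventually exceed \<open>x\<close> there.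
  Tempered growth fails because \<open>x = (1, 2, 1, \<dots>, 1) > 1\<close> has powers
  \<open>(1, 2\<^sup>m, 1, \<dots>, 1)\<close>, which the first coordinate keeps below the constant
  \<open>m + 1\<close> for every \<open>m \<ge> 1\<close>, so exponential growth in the second coordinate is invisible.\<close>

lemma nsmul_Suc: "nsmul H (Suc m) y = add H y (nsmul H m y)"
  by (simp add: nsmul_def)

lemma powH_Suc: "powH H x (Suc m) = mul H x (powH H x m)"
  by (simp add: powH_def)

lemma Rplus_lex_nsmul:
  assumes "length y = n"
  shows "nsmul (Rplus_lex n) m y = map (\<lambda>a. real m * a) y"
proof (induction m)
  case 0
  then show ?case using assms by (simp add: nsmul_def Rplus_lex_def map_replicate_const)
next
  case (Suc m)
  then show ?case
    by (simp add: nsmul_Suc Rplus_lex_def zip_map2 zip_same_conv_map o_def algebra_simps)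
qed

lemma Rplus_lex_powH:
  assumes "length x = n"
  shows "powH (Rplus_lex n) x m = map (\<lambda>a. a ^ m) x"
proof (induction m)
  case 0
  then show ?case using assms by (simp add: powH_def Rplus_lex_def map_replicate_const)
next
  case (Suc m)
  then show ?case by (simp add: powH_Suc Rplus_lex_def zip_map2 zip_same_conv_map o_def)
qed

lemma Rplus_lex_natH: "natH (Rplus_lex n) m = replicate n (real m)"
  using Rplus_lex_nsmul[of "replicate n 1" n m]
  by (simp add: natH_def Rplus_lex_def map_replicate_const)

lemma Rplus_lex_archimedean:
  assumes "0 < n"
  shows "archimedean (Rplus_lex n)"
  unfolding archimedean_def
proof (intro conjI ballI impI)
  obtain k where n: "n = Suc k" using assms gr0_implies_Suc by blast
  show "lt (Rplus_lex n) (zero (Rplus_lex n)) (one (Rplus_lex n))"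
    by (simp add: lt_def Rplus_lex_def n)
  have "replicate n 2 \<in> carrier (Rplus_lex n) - {zero (Rplus_lex n), one (Rplus_lex n)}"
    by (simp add: Rplus_lex_def n)
  then show "carrier (Rplus_lex n) \<noteq> {zero (Rplus_lex n), one (Rplus_lex n)}"
    by blast
  fix x y
  assume x: "x \<in> carrier (Rplus_lex n)" and y: "y \<in> carrier (Rplus_lex n)"
    and "lt (Rplus_lex n) y x \<and> lt (Rplus_lex n) (zero (Rplus_lex n)) y"
  then have "y \<noteq> replicate n 0" by (auto simp: lt_def Rplus_lex_def)
  with x y obtain a xs b ys where xy: "x = a # xs" "y = b # ys" and "0 < b"
    and lengths: "length x = n" "length y = n"
    by (cases x; cases y) (auto simp: Rplus_lex_def n)
  obtain m :: nat where "a / b < real m"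
    using reals_Archimedean2 by blast
  with \<open>0 < b\<close> have "a < real m * b"
    by (simp add: field_simps)
  moreover have "nsmul (Rplus_lex n) m y = map (\<lambda>a. real m * a) y"
    using Rplus_lex_nsmul lengths by blast
  ultimately have "lt (Rplus_lex n) x (nsmul (Rplus_lex n) m y)"
    by (simp add: lt_def Rplus_lex_def xy)
  then show "\<exists>m. lt (Rplus_lex n) x (nsmul (Rplus_lex n) m y)" ..
qed

lemma Rplus_lex_not_tempered_growth:
  assumes "1 < n"
  shows "\<not> tempered_growth (Rplus_lex n)"
proof
  assume tempered: "tempered_growth (Rplus_lex n)"
  obtain k where n: "n = Suc (Suc k)"
    using assms by (auto simp: less_iff_Suc_add)
  define x :: "real list" where "x = 1 # 2 # replicate k 1"
  have x: "x \<in> carrier (Rplus_lex n)" "length x = n"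
    by (simp_all add: Rplus_lex_def x_def n)
  have "le (Rplus_lex n) (powH (Rplus_lex n) x m) (natH (Rplus_lex n) (poly [:1, 1:] m))"
    for m :: nat
  proof -
    have powers: "powH (Rplus_lex n) x m = 1 # 2 ^ m # replicate k 1"
      using Rplus_lex_powH[OF \<open>length x = n\<close>] by (simp add: x_def)
    have bound: "natH (Rplus_lex n) (poly [:1, 1:] m) = replicate n (real m + 1)"
      by (simp add: Rplus_lex_natH)
    show ?thesis
      unfolding powers bound by (cases m) (simp_all add: Rplus_lex_def n)
  qed
  moreover have "[:1, 1:] \<noteq> (0 :: nat poly)" by simp
  ultimately have "le (Rplus_lex n) x (one (Rplus_lex n))"
    using tempered x unfolding tempered_growth_def by blast
  then show False by (simp add: Rplus_lex_def x_def n)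
qed

theorem lemma1p33:
  fixes n :: nat
  assumes "n > 1"
  shows "archimedean (Rplus_lex n) \<and> \<not> tempered_growth (Rplus_lex n)"
  using assms Rplus_lex_archimedean Rplus_lex_not_tempered_growth by simp

end
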